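(* Let $N\ge d$ and let $K\subset\mathbb{R}^d$ be a compact convex polytope of dimension $d$ with $N+1$ faces of codimension $1$, denoted $F_0,\dots,F_N$. Let $H_0,\dots,H_N$ be the hyperplanes with $F_j\subset H_j$, and let $n_0,\dots,n_N$ be corresponding normal vectors. Suppose every collection of $d$ vectors in $\{n_0,\dots,n_N\}$ is linearly independent. Then $K$ is an intersection of finitely many $d$-dimensional simplices, $$K=\bigcap_{j=1}^M S_j,\qquad M\le \binom{N+1}{d+1},$$ such that each (codimension-one) face of each $S_j$ contains a face of $K$.
   Context: A hyperplane $H=\{x\in\mathbb{R}^d\colon l(x)=0\}$ is the zero set of a nonconstant affine function $l(x)=n\cdot x+b$. The vector $n$ is a normal vector of $H$. *)

theory Defs
  imports "HOL-Analysis.Analysis"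
begin

end

theory Submission
  imports Defs
begin

text \<open>
  Write \<open>K\<close> as the intersection of its facet half-spaces \<open>u\<^sub>j \<bullet> x \<le> c\<^sub>j\<close>, where \<open>u\<^sub>j\<close>
  is a nonzero multiple of \<open>n\<^sub>j\<close>. If \<open>y \<notin> K\<close>, some inequality \<open>i\<close> fails at \<open>y\<close>.
  Since \<open>K\<close> is bounded, \<open>-u\<^sub>i\<close> lies in the cone spanned by the \<open>u\<^sub>j\<close>; a conic
  Caratheodory argument and the general position of the normals then give a set \<open>J \<ni> i\<close>
  of exactly \<open>d + 1\<close> indices with a positive dependency \<open>\<Sum>j\<in>J. l\<^sub>j u\<^sub>j = 0\<close>.
  The \<open>d + 1\<close> half-spaces indexed by such a \<open>J\<close> cut out a \<open>d\<close>-simplex (its vertices are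
  the points where \<open>d\<close> of the hyperplanes meet) whose facets lie on facets of \<open>K\<close>, and
  this simplex excludes \<open>y\<close>. So \<open>K\<close> is the intersection of these simplices, at most one
  for each \<open>(d + 1)\<close>-subset of the indices.
\<close>

definition family_independent :: "'i set \<Rightarrow> ('i \<Rightarrow> 'a::real_vector) \<Rightarrow> bool" where
  "family_independent A u \<longleftrightarrow> (\<forall>\<nu>. (\<Sum>j\<in>A. \<nu> j *\<^sub>R u j) = 0 \<longrightarrow> (\<forall>j\<in>A. \<nu> j = 0))"

lemma family_independent_iff:
  fixes u :: "'i \<Rightarrow> 'a::real_vector"
  assumes "finite A"
  shows "family_independent A u \<longleftrightarrow> inj_on u A \<and> independent (u ` A)"
proof
  assume indep: "family_independent A u"
  show "inj_on u A \<and> independent (u ` A)"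
  proof
    show inj: "inj_on u A"
    proof (rule inj_onI, rule ccontr)
      fix j k assume jk: "j \<in> A" "k \<in> A" "u j = u k" "j \<noteq> k"
      define \<nu> where "\<nu> i = (if i = j then 1 else if i = k then -1 else (0::real))" for i
      have "(\<Sum>i\<in>A. \<nu> i *\<^sub>R u i) = (\<Sum>i\<in>{j, k}. \<nu> i *\<^sub>R u i)"
        using jk by (intro sum.mono_neutral_right) (auto simp: \<nu>_def assms)
      also have "\<dots> = 0" using jk by (simp add: \<nu>_def)
      finally have "\<nu> j = 0" using indep jk(1) unfolding family_independent_def by blast
      then show False by (simp add: \<nu>_def)
    qed
    show "independent (u ` A)"
    proof
      assume "dependent (u ` A)"
      then obtain U where U: "\<exists>v\<in>u ` A. U v \<noteq> 0" "(\<Sum>v\<in>u ` A. U v *\<^sub>R v) = 0"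
        using dependent_finite[of "u ` A"] assms by auto
      then have "(\<Sum>j\<in>A. U (u j) *\<^sub>R u j) = 0" by (simp add: sum.reindex[OF inj])
      then show False using indep U(1) by (auto simp: family_independent_def)
    qed
  qed
next
  assume "inj_on u A \<and> independent (u ` A)"
  then have inj: "inj_on u A" and ind: "independent (u ` A)" by auto
  show "family_independent A u"
    unfolding family_independent_def
  proof (intro allI impI ballI)
    fix \<nu> j assume sum0: "(\<Sum>j\<in>A. \<nu> j *\<^sub>R u j) = 0" and j: "j \<in> A"
    define U where "U v = \<nu> (inv_into A u v)" for v
    have "(\<Sum>v\<in>u ` A. U v *\<^sub>R v) = (\<Sum>j\<in>A. \<nu> j *\<^sub>R u j)"
      by (simp add: sum.reindex[OF inj] U_def inv_into_f_f[OF inj])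
    then have "\<forall>v\<in>u ` A. U v = 0" using ind sum0 dependent_finite[of "u ` A"] assms by auto
    then show "\<nu> j = 0" using j by (auto simp: U_def inv_into_f_f[OF inj])
  qed
qed

lemma family_independent_subset:
  assumes "family_independent A u" "B \<subseteq> A" "finite A"
  shows "family_independent B u"
  unfolding family_independent_def
proof (intro allI impI ballI)
  fix \<nu> j assume sum0: "(\<Sum>j\<in>B. \<nu> j *\<^sub>R u j) = 0" and j: "j \<in> B"
  define \<nu>' where "\<nu>' i = (if i \<in> B then \<nu> i else 0)" for i
  have "(\<Sum>i\<in>A. \<nu>' i *\<^sub>R u i) = (\<Sum>i\<in>B. \<nu> i *\<^sub>R u i)"
    using assms(2,3) by (intro sum.mono_neutral_cong_right) (auto simp: \<nu>'_def)
  then have "\<nu>' j = 0" using assms(1,2) sum0 j by (auto simp: family_independent_def)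
  then show "\<nu> j = 0" using j by (simp add: \<nu>'_def)
qed

lemma family_independent_scaleR:
  assumes "family_independent A u" "\<And>j. j \<in> A \<Longrightarrow> m j \<noteq> 0 \<and> w j = m j *\<^sub>R u j"
  shows "family_independent A w"
  unfolding family_independent_def
proof (intro allI impI ballI)
  fix \<nu> j assume sum0: "(\<Sum>j\<in>A. \<nu> j *\<^sub>R w j) = 0" and j: "j \<in> A"
  have "(\<Sum>j\<in>A. (\<nu> j * m j) *\<^sub>R u j) = (\<Sum>j\<in>A. \<nu> j *\<^sub>R w j)"
    using assms(2) by (intro sum.cong) auto
  then have "\<nu> j * m j = 0"
    using assms(1)[unfolded family_independent_def, rule_format, of "\<lambda>j. \<nu> j * m j"] sum0 j by simp
  then show "\<nu> j = 0" using assms(2)[OF j] by simp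
qed

lemma nonneg_combination_eliminate_term:
  fixes u :: "'i \<Rightarrow> 'a::real_vector"
  assumes "finite I" "\<forall>j\<in>I. \<theta> j \<ge> 0" "\<not> family_independent I u"
  obtains \<theta>' k where "k \<in> I" "\<theta>' k = 0" "\<forall>j\<in>I. \<theta>' j \<ge> 0"
    "(\<Sum>j\<in>I. \<theta>' j *\<^sub>R u j) = (\<Sum>j\<in>I. \<theta> j *\<^sub>R u j)"
proof -
  obtain \<nu>0 where \<nu>0: "(\<Sum>j\<in>I. \<nu>0 j *\<^sub>R u j) = 0" "\<exists>j\<in>I. \<nu>0 j \<noteq> 0"
    using assms(3) by (auto simp: family_independent_def)
  obtain \<nu> where \<nu>: "(\<Sum>j\<in>I. \<nu> j *\<^sub>R u j) = 0" "\<exists>j\<in>I. \<nu> j > 0"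
  proof (cases "\<exists>j\<in>I. \<nu>0 j > 0")
    case False
    then have "\<exists>j\<in>I. - \<nu>0 j > 0" using \<nu>0(2) by force
    moreover have "(\<Sum>j\<in>I. (- \<nu>0 j) *\<^sub>R u j) = 0" using \<nu>0(1) by (simp add: sum_negf)
    ultimately show ?thesis using that[of "\<lambda>j. - \<nu>0 j"] by blast
  qed (use \<nu>0 that in blast)
  define Q where "Q = {j\<in>I. \<nu> j > 0}"
  have "finite Q" "Q \<noteq> {}" using assms(1) \<nu>(2) by (auto simp: Q_def)
  \<comment> \<open>the minimal ratio keeps all coefficients nonnegative and kills one of them\<close>
  then obtain k where k: "k \<in> Q" and kmin: "\<And>j. j \<in> Q \<Longrightarrow> \<theta> k / \<nu> k \<le> \<theta> j / \<nu> j"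
    using ex_is_arg_min_if_finite[of Q "\<lambda>j. \<theta> j / \<nu> j"] unfolding is_arg_min_def by (metis not_less)
  define t where "t = \<theta> k / \<nu> k"
  have t: "t \<ge> 0" using k assms(2) by (auto simp: Q_def t_def)
  show ?thesis
  proof
    show "k \<in> I" using k by (simp add: Q_def)
    show "\<theta> k - t * \<nu> k = 0" using k by (simp add: Q_def t_def)
    show "\<forall>j\<in>I. 0 \<le> \<theta> j - t * \<nu> j"
    proof
      fix j assume j: "j \<in> I"
      show "0 \<le> \<theta> j - t * \<nu> j"
      proof (cases "j \<in> Q")
        case True
        then show ?thesis using kmin[OF True] by (simp add: Q_def t_def pos_le_divide_eq)
      next
        case False
        then have "t * \<nu> j \<le> 0" using j t by (simp add: Q_def mult_nonneg_nonpos)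
        moreover have "\<theta> j \<ge> 0" using j assms(2) by blast
        ultimately show ?thesis by linarith
      qed
    qed
    show "(\<Sum>j\<in>I. (\<theta> j - t * \<nu> j) *\<^sub>R u j) = (\<Sum>j\<in>I. \<theta> j *\<^sub>R u j)"
    proof -
      have "(\<Sum>j\<in>I. (\<theta> j - t * \<nu> j) *\<^sub>R u j)
          = (\<Sum>j\<in>I. \<theta> j *\<^sub>R u j) - t *\<^sub>R (\<Sum>j\<in>I. \<nu> j *\<^sub>R u j)"
        by (simp add: scaleR_diff_left sum_subtractf scaleR_sum_right)
      then show ?thesis using \<nu>(1) by simp
    qed
  qed
qed

lemma conic_caratheodory_family:
  fixes u :: "'i \<Rightarrow> 'a::real_vector"
  assumes "finite I" "\<forall>j\<in>I. \<theta> j \<ge> 0"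
  shows "\<exists>J\<subseteq>I. \<exists>\<mu>. family_independent J u \<and> (\<forall>j\<in>J. \<mu> j > 0)
           \<and> (\<Sum>j\<in>J. \<mu> j *\<^sub>R u j) = (\<Sum>j\<in>I. \<theta> j *\<^sub>R u j)"
  using assms
proof (induction I arbitrary: \<theta> rule: finite_psubset_induct)
  case (psubset I)
  have drop: "\<exists>J\<subseteq>I. \<exists>\<mu>. family_independent J u \<and> (\<forall>j\<in>J. \<mu> j > 0)
           \<and> (\<Sum>j\<in>J. \<mu> j *\<^sub>R u j) = (\<Sum>j\<in>I. \<theta>' j *\<^sub>R u j)"
    if k: "k \<in> I" "\<theta>' k = 0" and nonneg: "\<forall>j\<in>I. \<theta>' j \<ge> 0" for \<theta>' k
  proof -
    have "I - {k} \<subset> I" "\<forall>j\<in>I - {k}. \<theta>' j \<ge> 0" using k nonneg by auto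
    from psubset.IH[OF this]
    obtain J \<mu> where J: "J \<subseteq> I - {k}" "family_independent J u" "\<forall>j\<in>J. \<mu> j > 0"
        "(\<Sum>j\<in>J. \<mu> j *\<^sub>R u j) = (\<Sum>j\<in>I - {k}. \<theta>' j *\<^sub>R u j)"
      by blast
    have "(\<Sum>j\<in>I - {k}. \<theta>' j *\<^sub>R u j) = (\<Sum>j\<in>I. \<theta>' j *\<^sub>R u j)"
      using k psubset.hyps(1) by (simp add: sum.remove)
    then show ?thesis
      using J by (intro exI[of _ J] conjI exI[of _ \<mu>]) auto
  qed
  show ?case
  proof (cases "\<exists>k\<in>I. \<theta> k = 0")
    case True
    then obtain k where "k \<in> I" "\<theta> k = 0" by blast
    with drop psubset.prems show ?thesis by blast
  next
    case False
    then have pos: "\<forall>j\<in>I. \<theta> j > 0" using psubset.prems by (auto simp: order.strict_iff_order)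
    show ?thesis
    proof (cases "family_independent I u")
      case True
      then show ?thesis
        using pos by (intro exI[of _ I] conjI exI[of _ \<theta>]) auto
    next
      case dep: False
      obtain \<theta>' k where "k \<in> I" "\<theta>' k = 0" "\<forall>j\<in>I. \<theta>' j \<ge> 0"
          and eq: "(\<Sum>j\<in>I. \<theta>' j *\<^sub>R u j) = (\<Sum>j\<in>I. \<theta> j *\<^sub>R u j)"
        using nonneg_combination_eliminate_term[OF psubset.hyps(1) psubset.prems dep] by blast
      then show ?thesis using drop[of k \<theta>'] by (simp only: eq)
    qed
  qed
qed

definition halfspace_Inter :: "'i set \<Rightarrow> ('i \<Rightarrow> 'a::real_inner) \<Rightarrow> ('i \<Rightarrow> real) \<Rightarrow> 'a set" where
  "halfspace_Inter J u c = {x. \<forall>j\<in>J. u j \<bullet> x \<le> c j}"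

lemma halfspace_Inter_antimono: "J \<subseteq> I \<Longrightarrow> halfspace_Inter I u c \<subseteq> halfspace_Inter J u c"
  by (auto simp: halfspace_Inter_def)

lemma convex_halfspace_Inter: "convex (halfspace_Inter J u c)"
proof -
  have "halfspace_Inter J u c = (\<Inter>j\<in>J. {x. u j \<bullet> x \<le> c j})"
    by (auto simp: halfspace_Inter_def)
  then show ?thesis by (simp add: convex_INT convex_halfspace_le)
qed

lemma bounded_ray_imp_zero:
  fixes a :: "'a::real_normed_vector"
  assumes "bounded S" "\<And>t. t \<ge> 0 \<Longrightarrow> p + t *\<^sub>R a \<in> S"
  shows "a = 0"
proof (rule ccontr)
  assume a: "a \<noteq> 0"
  obtain B where B: "\<And>x. x \<in> S \<Longrightarrow> norm x \<le> B" using assms(1) by (auto simp: bounded_iff)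
  define t where "t = (B + norm p + 1) / norm a"
  have "p \<in> S" using assms(2)[of 0] by simp
  then have "B \<ge> 0" using B norm_ge_zero[of p] by (meson order_trans)
  then have t: "t \<ge> 0" by (simp add: t_def)
  have "norm (t *\<^sub>R a) = B + norm p + 1"
    using a t \<open>B \<ge> 0\<close> by (simp add: t_def)
  moreover have "norm (t *\<^sub>R a) \<le> norm (p + t *\<^sub>R a) + norm p"
    using norm_triangle_ineq4[of "p + t *\<^sub>R a" p] by simp
  moreover have "norm (p + t *\<^sub>R a) \<le> B" using B assms(2) t by blast
  ultimately show False by simp
qed

lemma convex_cone_hull_subset_nonneg_combinations:
  assumes "finite I"
  shows "convex_cone hull (u ` I) \<subseteq> {\<Sum>j\<in>I. \<theta> j *\<^sub>R u j | \<theta>. \<forall>j\<in>I. \<theta> j \<ge> 0}"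
    (is "_ \<subseteq> ?C")
proof (rule hull_minimal)
  show "u ` I \<subseteq> ?C"
  proof
    fix x assume "x \<in> u ` I"
    then obtain k where k: "k \<in> I" "x = u k" by blast
    have "(\<Sum>j\<in>I. (if j = k then 1 else 0) *\<^sub>R u j) = (\<Sum>j\<in>I. if j = k then u j else 0)"
      by (rule sum.cong) auto
    also have "\<dots> = u k" using k(1) assms by simp
    finally show "x \<in> ?C"
      using k(2) by (auto intro!: exI[of _ "\<lambda>j. if j = k then 1 else 0"])
  qed
  show "convex_cone ?C"
    unfolding convex_cone_iff
  proof (intro conjI ballI allI impI)
    show "0 \<in> ?C" by (auto intro!: exI[of _ "\<lambda>_. 0"])
  next
    fix x y assume "x \<in> ?C" "y \<in> ?C"
    then obtain \<theta> \<eta> where "\<forall>j\<in>I. \<theta> j \<ge> 0" "\<forall>j\<in>I. \<eta> j \<ge> 0"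
      "x = (\<Sum>j\<in>I. \<theta> j *\<^sub>R u j)" "y = (\<Sum>j\<in>I. \<eta> j *\<^sub>R u j)"
      by blast
    then show "x + y \<in> ?C"
      by (auto intro!: exI[of _ "\<lambda>j. \<theta> j + \<eta> j"] simp: scaleR_add_left sum.distrib)
  next
    fix x and r :: real assume "x \<in> ?C" "0 \<le> r"
    then obtain \<theta> where "\<forall>j\<in>I. \<theta> j \<ge> 0" "x = (\<Sum>j\<in>I. \<theta> j *\<^sub>R u j)"
      by blast
    with \<open>0 \<le> r\<close> show "r *\<^sub>R x \<in> ?C"
      by (auto intro!: exI[of _ "\<lambda>j. r * \<theta> j"] simp: scaleR_sum_right)
  qed
qed

lemma bounded_halfspace_Inter_conic_span:
  fixes u :: "'i \<Rightarrow> 'a::euclidean_space"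
  assumes "finite I" "bounded (halfspace_Inter I u c)" "p \<in> halfspace_Inter I u c"
  shows "\<exists>\<theta>. (\<forall>j\<in>I. \<theta> j \<ge> 0) \<and> v = (\<Sum>j\<in>I. \<theta> j *\<^sub>R u j)"
proof (rule ccontr)
  assume "\<nexists>\<theta>. (\<forall>j\<in>I. \<theta> j \<ge> 0) \<and> v = (\<Sum>j\<in>I. \<theta> j *\<^sub>R u j)"
  then have "v \<notin> convex_cone hull (u ` I)"
    using convex_cone_hull_subset_nonneg_combinations[OF assms(1), of u] by blast
  \<comment> \<open>a hyperplane separating \<open>v\<close> from the cone spanned by the normals gives a direction of recession\<close>
  then obtain a b where ab: "a \<bullet> v < b" "\<And>x. x \<in> convex_cone hull (u ` I) \<Longrightarrow> b < a \<bullet> x"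
    using separating_hyperplane_closed_point[OF convex_convex_cone_hull closed_convex_cone_hull] assms(1)
    by (metis finite_imageI)
  have "b < 0" using ab(2)[OF convex_cone_hull_contains_0] by simp
  have a_nonneg: "a \<bullet> u j \<ge> 0" if "j \<in> I" for j
  proof (rule ccontr)
    assume neg: "\<not> a \<bullet> u j \<ge> 0"
    have "u j \<in> convex_cone hull (u ` I)" using that by (simp add: hull_inc)
    moreover have "0 \<le> b / (a \<bullet> u j)"
      using neg \<open>b < 0\<close> by (intro divide_nonpos_neg) auto
    ultimately have "(b / (a \<bullet> u j)) *\<^sub>R u j \<in> convex_cone hull (u ` I)"
      using conic_convex_cone_hull by (auto simp: conic_def)
    then have "b < a \<bullet> ((b / (a \<bullet> u j)) *\<^sub>R u j)" by (rule ab(2))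
    then show False using neg by simp
  qed
  have "- a = 0"
  proof (rule bounded_ray_imp_zero[OF assms(2)])
    fix t :: real assume t: "t \<ge> 0"
    have "u j \<bullet> (p + t *\<^sub>R - a) \<le> c j" if j: "j \<in> I" for j
    proof -
      have "u j \<bullet> (p + t *\<^sub>R - a) = u j \<bullet> p - t * (a \<bullet> u j)"
        by (simp add: inner_diff_right inner_commute)
      moreover have "t * (a \<bullet> u j) \<ge> 0" using t a_nonneg[OF j] by simp
      moreover have "u j \<bullet> p \<le> c j" using assms(3) j by (simp add: halfspace_Inter_def)
      ultimately show ?thesis by linarith
    qed
    then show "p + t *\<^sub>R - a \<in> halfspace_Inter I u c" by (simp add: halfspace_Inter_def)
  qed
  then show False using ab \<open>b < 0\<close> by simp
qed

lemma positive_circuit_through: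
  fixes u :: "'i \<Rightarrow> 'a::euclidean_space"
  assumes "finite I" "i \<in> I" "bounded (halfspace_Inter I u c)" "p \<in> halfspace_Inter I u c"
    and generic: "\<And>A. A \<subseteq> I \<Longrightarrow> card A \<le> DIM('a) \<Longrightarrow> family_independent A u"
  obtains J l where "J \<subseteq> I" "i \<in> J" "card J = DIM('a) + 1"
    "\<forall>j\<in>J. l j > 0" "(\<Sum>j\<in>J. l j *\<^sub>R u j) = 0"
proof -
  obtain \<theta> where \<theta>: "\<forall>j\<in>I. \<theta> j \<ge> 0" "- u i = (\<Sum>j\<in>I. \<theta> j *\<^sub>R u j)"
    using bounded_halfspace_Inter_conic_span[OF assms(1,3,4)] by blast
  obtain J' \<mu> where J': "J' \<subseteq> I" "family_independent J' u" "\<forall>j\<in>J'. \<mu> j > 0"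
    "(\<Sum>j\<in>J'. \<mu> j *\<^sub>R u j) = - u i"
    using conic_caratheodory_family[OF assms(1) \<theta>(1), of u] \<theta>(2) by auto
  have fin: "finite J'" using J'(1) assms(1) finite_subset by blast
  define J where "J = insert i J'"
  define l where "l j = (if j \<in> J' then \<mu> j else 0) + (if j = i then 1 else 0)" for j
  have "(\<Sum>j\<in>J. l j *\<^sub>R u j)
      = (\<Sum>j\<in>J. (if j \<in> J' then \<mu> j else 0) *\<^sub>R u j) + (\<Sum>j\<in>J. (if j = i then 1 else 0) *\<^sub>R u j)"
    by (simp add: l_def scaleR_add_left sum.distrib)
  also have "(\<Sum>j\<in>J. (if j \<in> J' then \<mu> j else 0) *\<^sub>R u j) = (\<Sum>j\<in>J'. \<mu> j *\<^sub>R u j)"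
    using fin by (intro sum.mono_neutral_cong_right) (auto simp: J_def)
  also have "(\<Sum>j\<in>J. (if j = i then 1 else 0) *\<^sub>R u j) = u i"
    using fin by (simp add: J_def if_distrib[of "\<lambda>r. r *\<^sub>R _"] cong: if_cong)
  finally have dep: "(\<Sum>j\<in>J. l j *\<^sub>R u j) = 0" using J'(4) by simp
  have pos: "\<forall>j\<in>J. l j > 0" using J'(3) by (auto simp: J_def l_def add_pos_nonneg)
  have "card J' \<le> DIM('a)"
    using J'(2) fin independent_bound[of "u ` J'"] by (simp add: family_independent_iff card_image)
  then have "card J \<le> DIM('a) + 1" using fin by (simp add: J_def card_insert_if)
  moreover have "\<not> card J \<le> DIM('a)"
  proof
    assume "card J \<le> DIM('a)"
    then have "family_independent J u" using generic J'(1) assms(2) by (simp add: J_def)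
    then show False using dep pos by (auto simp: family_independent_def J_def)
  qed
  ultimately have "card J = DIM('a) + 1" by simp
  with J'(1) assms(2) pos dep show ?thesis by (intro that[of J l]) (auto simp: J_def)
qed

lemma span_family_independent_DIM:
  fixes u :: "'i \<Rightarrow> 'a::euclidean_space"
  assumes "finite A" "card A = DIM('a)" "family_independent A u"
  shows "span (u ` A) = UNIV"
proof -
  have "inj_on u A" "independent (u ` A)" using assms(1,3) by (simp_all add: family_independent_iff)
  moreover from this have "card (u ` A) = DIM('a)" using assms(2) by (simp add: card_image)
  ultimately show ?thesis using card_ge_dim_independent[of "u ` A" UNIV] by auto
qed

lemma family_independent_DIM_inner_eq_zero:
  fixes u :: "'i \<Rightarrow> 'a::euclidean_space"
  assumes "finite A" "card A = DIM('a)" "family_independent A u"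
    and "\<And>j. j \<in> A \<Longrightarrow> u j \<bullet> z = 0"
  shows "z = 0"
proof -
  have "z \<in> span (u ` A)" using span_family_independent_DIM[OF assms(1-3)] by simp
  then have "orthogonal z z"
    by (rule orthogonal_to_span) (use assms(4) in \<open>auto simp: orthogonal_def inner_commute\<close>)
  then show ?thesis by (simp add: orthogonal_self)
qed

lemma family_independent_DIM_dual_vector:
  fixes u :: "'i \<Rightarrow> 'a::euclidean_space"
  assumes "finite A" "card A = DIM('a)" "family_independent A u" "k \<in> A"
  shows "\<exists>w. u k \<bullet> w = 1 \<and> (\<forall>j\<in>A - {k}. u j \<bullet> w = 0)"
proof -
  have "dim (u ` (A - {k})) \<le> card (A - {k})"
    using assms(1) by (meson dim_le_card' card_image_le finite_Diff finite_imageI order_trans)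
  also have "\<dots> < DIM('a)" using assms(1,2,4) by (simp add: card_Diff_singleton)
  finally obtain x where x: "x \<noteq> 0" "\<And>y. y \<in> span (u ` (A - {k})) \<Longrightarrow> orthogonal x y"
    using orthogonal_to_subspace_exists by blast
  have x_perp: "u j \<bullet> x = 0" if "j \<in> A - {k}" for j
    using x(2)[of "u j"] that by (auto simp: orthogonal_def inner_commute span_base)
  have "u k \<bullet> x \<noteq> 0"
  proof
    assume "u k \<bullet> x = 0"
    then have "x = 0"
      using family_independent_DIM_inner_eq_zero[OF assms(1-3)] x_perp by blast
    then show False using x(1) by simp
  qed
  then show ?thesis
    using x_perp by (intro exI[of _ "(1 / (u k \<bullet> x)) *\<^sub>R x"] conjI ballI) simp_all
qed

lemma family_independent_DIM_solvable:
  fixes u :: "'i \<Rightarrow> 'a::euclidean_space"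
  assumes "finite A" "card A = DIM('a)" "family_independent A u"
  shows "\<exists>v. \<forall>j\<in>A. u j \<bullet> v = c j"
proof -
  obtain w where w: "\<And>k. k \<in> A \<Longrightarrow> u k \<bullet> w k = 1 \<and> (\<forall>j\<in>A - {k}. u j \<bullet> w k = 0)"
    using family_independent_DIM_dual_vector[OF assms] by metis
  have "u j \<bullet> (\<Sum>k\<in>A. c k *\<^sub>R w k) = c j" if j: "j \<in> A" for j
  proof -
    have "u j \<bullet> (\<Sum>k\<in>A. c k *\<^sub>R w k) = (\<Sum>k\<in>A. if k = j then c j else 0)"
      unfolding inner_sum_right by (rule sum.cong) (use w j in auto)
    then show ?thesis using j assms(1) by simp
  qed
  then show ?thesis by blast
qed

lemma weighted_slack_sum:
  assumes "(\<Sum>j\<in>J. l j *\<^sub>R u j) = 0"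
  shows "(\<Sum>j\<in>J. l j * (c j - u j \<bullet> x)) = (\<Sum>j\<in>J. l j * c j)"
proof -
  have "(\<Sum>j\<in>J. l j * (u j \<bullet> x)) = (\<Sum>j\<in>J. l j *\<^sub>R u j) \<bullet> x"
    by (simp add: inner_sum_left)
  then show ?thesis using assms by (simp add: right_diff_distrib sum_subtractf)
qed

locale positive_circuit =
  fixes J :: "'i set" and u :: "'i \<Rightarrow> 'a::euclidean_space" and c l :: "'i \<Rightarrow> real"
  assumes finite_J: "finite J" and card_J: "card J = DIM('a) + 1"
    and l_pos: "\<And>j. j \<in> J \<Longrightarrow> 0 < l j"
    and dependency: "(\<Sum>j\<in>J. l j *\<^sub>R u j) = 0"
    and independent_Diff: "\<And>k. k \<in> J \<Longrightarrow> family_independent (J - {k}) u"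
    and slack_pos: "0 < (\<Sum>j\<in>J. l j * c j)"
begin

definition vertex :: "'i \<Rightarrow> 'a" where
  "vertex k = (SOME v. \<forall>j\<in>J - {k}. u j \<bullet> v = c j)"

text \<open>The weighted slacks, normalised to sum to \<open>1\<close>: these are the barycentric coordinates
  with respect to the vertices.\<close>
definition bary :: "'a \<Rightarrow> 'i \<Rightarrow> real" where
  "bary x k = l k * (c k - u k \<bullet> x) / (\<Sum>j\<in>J. l j * c j)"

lemma card_Diff: "k \<in> J \<Longrightarrow> card (J - {k}) = DIM('a)"
  using finite_J card_J by (simp add: card_Diff_singleton)

lemma inner_vertex:
  assumes "j \<in> J" "k \<in> J" "j \<noteq> k"
  shows "u j \<bullet> vertex k = c j"
proof -
  have "\<exists>v. \<forall>j\<in>J - {k}. u j \<bullet> v = c j"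
    using family_independent_DIM_solvable[OF _ card_Diff[OF assms(2)] independent_Diff[OF assms(2)]]
      finite_J by blast
  then have "\<forall>j\<in>J - {k}. u j \<bullet> vertex k = c j" unfolding vertex_def by (rule someI_ex)
  then show ?thesis using assms by blast
qed

lemma sum_bary: "(\<Sum>k\<in>J. bary x k) = 1"
  using weighted_slack_sum[OF dependency, of c x] slack_pos
  by (simp add: bary_def sum_divide_distrib[symmetric])

lemma bary_eq_0_iff: "k \<in> J \<Longrightarrow> bary x k = 0 \<longleftrightarrow> u k \<bullet> x = c k"
  using l_pos[of k] slack_pos by (auto simp: bary_def)

lemma bary_nonneg_iff: "k \<in> J \<Longrightarrow> 0 \<le> bary x k \<longleftrightarrow> u k \<bullet> x \<le> c k"
  using l_pos[of k] slack_pos by (simp add: bary_def zero_le_divide_iff zero_le_mult_iff)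

lemma bary_vertex:
  assumes "j \<in> J" "k \<in> J"
  shows "bary (vertex k) j = (if j = k then 1 else 0)"
proof (cases "j = k")
  case True
  note k = assms(2)
  have "1 = bary (vertex k) k + (\<Sum>i\<in>J - {k}. bary (vertex k) i)"
    using sum_bary[of "vertex k"] sum.remove[OF finite_J k, of "bary (vertex k)"] by linarith
  also have "(\<Sum>i\<in>J - {k}. bary (vertex k) i) = 0"
    by (rule sum.neutral) (use k in \<open>auto simp: bary_eq_0_iff inner_vertex\<close>)
  finally show ?thesis using True by simp
qed (use assms in \<open>simp add: bary_eq_0_iff inner_vertex\<close>)

lemma bary_affine:
  assumes "(\<Sum>k\<in>J. \<alpha> k) = 1"
  shows "bary (\<Sum>k\<in>J. \<alpha> k *\<^sub>R w k) j = (\<Sum>k\<in>J. \<alpha> k * bary (w k) j)"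
proof -
  have "c j - u j \<bullet> (\<Sum>k\<in>J. \<alpha> k *\<^sub>R w k) = (\<Sum>k\<in>J. \<alpha> k * c j) - (\<Sum>k\<in>J. \<alpha> k * (u j \<bullet> w k))"
    using assms by (simp add: inner_sum_right sum_distrib_right[symmetric])
  also have "\<dots> = (\<Sum>k\<in>J. \<alpha> k * (c j - u j \<bullet> w k))"
    by (simp add: right_diff_distrib sum_subtractf)
  finally have "bary (\<Sum>k\<in>J. \<alpha> k *\<^sub>R w k) j
      = l j * (\<Sum>k\<in>J. \<alpha> k * (c j - u j \<bullet> w k)) / (\<Sum>i\<in>J. l i * c i)"
    by (simp only: bary_def)
  also have "\<dots> = (\<Sum>k\<in>J. \<alpha> k * (l j * (c j - u j \<bullet> w k) / (\<Sum>i\<in>J. l i * c i)))"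
    by (simp add: sum_distrib_left sum_divide_distrib mult.left_commute)
  finally show ?thesis by (simp only: bary_def)
qed

lemma bary_inject:
  assumes "\<And>j. j \<in> J \<Longrightarrow> bary x j = bary y j"
  shows "x = y"
proof -
  have eq: "u j \<bullet> (x - y) = 0" if "j \<in> J" for j
    using assms[OF that] l_pos[OF that] slack_pos by (simp add: bary_def inner_diff_right)
  obtain k where k: "k \<in> J" using card_J by fastforce
  have "x - y = 0"
    using family_independent_DIM_inner_eq_zero[OF _ card_Diff[OF k] independent_Diff[OF k]]
      finite_J eq by blast
  then show ?thesis by simp
qed

lemma barycentric_expansion: "(\<Sum>k\<in>J. bary x k *\<^sub>R vertex k) = x"
proof (rule bary_inject)
  fix j assume j: "j \<in> J"
  have "bary (\<Sum>k\<in>J. bary x k *\<^sub>R vertex k) j = (\<Sum>k\<in>J. if k = j then bary x k else 0)"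
    unfolding bary_affine[OF sum_bary] by (rule sum.cong) (use j in \<open>auto simp: bary_vertex\<close>)
  then show "bary (\<Sum>k\<in>J. bary x k *\<^sub>R vertex k) j = bary x j" using j finite_J by simp
qed

lemma inj_on_vertex: "inj_on vertex J"
proof (rule inj_onI)
  fix j k assume jk: "j \<in> J" "k \<in> J" "vertex j = vertex k"
  then have "bary (vertex k) j = 1" using bary_vertex[of j j] by simp
  then show "j = k" using bary_vertex[of j k] jk(1,2) by (auto split: if_splits)
qed

lemma halfspace_Inter_eq_convex_hull: "halfspace_Inter J u c = convex hull (vertex ` J)"
proof
  show "halfspace_Inter J u c \<subseteq> convex hull (vertex ` J)"
  proof
    fix x assume "x \<in> halfspace_Inter J u c"
    then have "\<And>k. k \<in> J \<Longrightarrow> 0 \<le> bary x k" by (simp add: halfspace_Inter_def bary_nonneg_iff)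
    then have "(\<Sum>k\<in>J. bary x k *\<^sub>R vertex k) \<in> convex hull (vertex ` J)"
      by (intro convex_sum[OF finite_J convex_convex_hull sum_bary]) (auto simp: hull_inc)
    then show "x \<in> convex hull (vertex ` J)" by (simp only: barycentric_expansion)
  qed
  have "vertex k \<in> halfspace_Inter J u c" if "k \<in> J" for k
    using that by (auto simp: halfspace_Inter_def bary_nonneg_iff[symmetric] bary_vertex)
  then have "vertex ` J \<subseteq> halfspace_Inter J u c" by blast
  then show "convex hull (vertex ` J) \<subseteq> halfspace_Inter J u c"
    using convex_halfspace_Inter by (rule hull_minimal)
qed

lemma affine_independent_vertices: "\<not> affine_dependent (vertex ` J)"
proof
  assume "affine_dependent (vertex ` J)"
  then obtain k where k: "k \<in> J" "vertex k \<in> affine hull (vertex ` J - {vertex k})"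
    by (auto simp: affine_dependent_def)
  have "vertex ` J - {vertex k} \<subseteq> {x. u k \<bullet> x = c k}"
    using k(1) inner_vertex[of k] by blast
  then have "affine hull (vertex ` J - {vertex k}) \<subseteq> {x. u k \<bullet> x = c k}"
    by (intro hull_minimal affine_hyperplane)
  then have "bary (vertex k) k = 0" using k by (auto simp: bary_eq_0_iff)
  then show False using k(1) by (simp add: bary_vertex)
qed

lemma simplex_halfspace_Inter: "int DIM('a) simplex halfspace_Inter J u c"
  unfolding halfspace_Inter_eq_convex_hull
  by (rule simplex_convex_hull)
    (simp add: affine_independent_vertices card_image[OF inj_on_vertex] card_J)

lemma facet_of_halfspace_Inter:
  assumes "G facet_of halfspace_Inter J u c"
  shows "\<exists>k\<in>J. halfspace_Inter J u c \<inter> {x. u k \<bullet> x = c k} \<subseteq> G"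
proof -
  have "G facet_of convex hull (vertex ` J)"
    using assms by (simp only: halfspace_Inter_eq_convex_hull)
  then obtain k where k: "k \<in> J" "G = convex hull (vertex ` J - {vertex k})"
    using facet_of_convex_hull_affine_independent[OF affine_independent_vertices] by blast
  have "x \<in> G" if x: "x \<in> halfspace_Inter J u c" "u k \<bullet> x = c k" for x
  proof -
    have "bary x k = 0" using x k(1) by (simp add: bary_eq_0_iff)
    have "x = (\<Sum>j\<in>J. bary x j *\<^sub>R vertex j)" by (simp only: barycentric_expansion)
    also have "\<dots> = (\<Sum>j\<in>J - {k}. bary x j *\<^sub>R vertex j)"
      using sum.remove[OF finite_J k(1), of "\<lambda>j. bary x j *\<^sub>R vertex j"] \<open>bary x k = 0\<close> by simp
    also have "\<dots> \<in> convex hull (vertex ` J - {vertex k})"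
    proof (rule convex_sum[OF _ convex_convex_hull])
      show "(\<Sum>j\<in>J - {k}. bary x j) = 1"
        using sum_bary[of x] sum.remove[OF finite_J k(1), of "bary x"] \<open>bary x k = 0\<close> by simp
      show "\<And>j. j \<in> J - {k} \<Longrightarrow> 0 \<le> bary x j"
        using x(1) by (simp add: halfspace_Inter_def bary_nonneg_iff)
      show "\<And>j. j \<in> J - {k} \<Longrightarrow> vertex j \<in> convex hull (vertex ` J - {vertex k})"
        using inj_on_vertex k(1) by (intro hull_inc) (auto simp: inj_on_def)
    qed (use finite_J in simp)
    finally show ?thesis using k(2) by simp
  qed
  then show ?thesis using k(1) by blast
qed

end

lemma family_independent_if_bases:
  fixes nv u :: "'i \<Rightarrow> 'a::euclidean_space"
  assumes "finite I" "DIM('a) \<le> card I"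
    and bases: "\<And>J. J \<subseteq> I \<Longrightarrow> card J = DIM('a) \<Longrightarrow> inj_on nv J \<and> independent (nv ` J)"
    and scaled: "\<And>j. j \<in> I \<Longrightarrow> m j \<noteq> 0 \<and> u j = m j *\<^sub>R nv j"
    and A: "A \<subseteq> I" "card A \<le> DIM('a)"
  shows "family_independent A u"
proof -
  obtain A' where A': "A \<subseteq> A'" "A' \<subseteq> I" "card A' = DIM('a)"
    using exists_subset_between[OF A(2) assms(2) A(1) assms(1)] by blast
  then have "family_independent A' nv"
    using bases assms(1) by (simp add: family_independent_iff finite_subset)
  moreover have "m j \<noteq> 0 \<and> u j = m j *\<^sub>R nv j" if "j \<in> A'" for j
    using scaled A'(2) that by blast
  ultimately have "family_independent A' u" by (rule family_independent_scaleR)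
  then show ?thesis using A'(1,2) assms(1) family_independent_subset finite_subset by blast
qed

definition positive_circuits :: "'i set \<Rightarrow> ('i \<Rightarrow> 'a::euclidean_space) \<Rightarrow> 'i set set" where
  "positive_circuits I u = {J. J \<subseteq> I \<and> card J = DIM('a) + 1
      \<and> (\<exists>l. (\<forall>j\<in>J. l j > 0) \<and> (\<Sum>j\<in>J. l j *\<^sub>R u j) = 0)}"

lemma card_positive_circuits_le:
  fixes u :: "'i \<Rightarrow> 'a::euclidean_space"
  assumes "finite I"
  shows "finite (positive_circuits I u)"
    and "card (positive_circuits I u) \<le> card I choose (DIM('a) + 1)"
proof -
  have fin: "finite {J. J \<subseteq> I \<and> card J = DIM('a) + 1}" using assms by simp
  have sub: "positive_circuits I u \<subseteq> {J. J \<subseteq> I \<and> card J = DIM('a) + 1}"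
    unfolding positive_circuits_def by blast
  show "finite (positive_circuits I u)" using finite_subset[OF sub fin] .
  have "card (positive_circuits I u) \<le> card {J. J \<subseteq> I \<and> card J = DIM('a) + 1}"
    by (rule card_mono[OF fin sub])
  also have "\<dots> = card I choose (DIM('a) + 1)" by (rule n_subsets[OF assms])
  finally show "card (positive_circuits I u) \<le> card I choose (DIM('a) + 1)" .
qed

lemma positive_circuit_if_interior_point:
  fixes u :: "'i \<Rightarrow> 'a::euclidean_space"
  assumes "finite I" "J \<in> positive_circuits I u" "\<forall>j\<in>I. u j \<bullet> p < c j"
    and generic: "\<And>A. A \<subseteq> I \<Longrightarrow> card A \<le> DIM('a) \<Longrightarrow> family_independent A u"
  obtains l where "positive_circuit J u c l"
proof -
  obtain l where J: "J \<subseteq> I" "card J = DIM('a) + 1" "\<forall>j\<in>J. l j > 0" "(\<Sum>j\<in>J. l j *\<^sub>R u j) = 0"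
    using assms(2) unfolding positive_circuits_def by blast
  have "finite J" using J(1) assms(1) finite_subset by blast
  have "0 < (\<Sum>j\<in>J. l j * (c j - u j \<bullet> p))"
    using J assms(3) \<open>finite J\<close> by (intro sum_pos) auto
  then have "0 < (\<Sum>j\<in>J. l j * c j)" by (simp add: weighted_slack_sum[OF J(4)])
  moreover have "family_independent (J - {k}) u" if "k \<in> J" for k
    using generic[of "J - {k}"] J(1,2) that \<open>finite J\<close> by (auto simp: card_Diff_singleton)
  ultimately have "positive_circuit J u c l"
    using J \<open>finite J\<close> by unfold_locales auto
  then show ?thesis by (rule that)
qed

lemma halfspace_Inter_eq_Inter_positive_circuits:
  fixes u :: "'i \<Rightarrow> 'a::euclidean_space"
  assumes "finite I" "bounded (halfspace_Inter I u c)" "p \<in> halfspace_Inter I u c"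
    and generic: "\<And>A. A \<subseteq> I \<Longrightarrow> card A \<le> DIM('a) \<Longrightarrow> family_independent A u"
  shows "halfspace_Inter I u c = (\<Inter>J\<in>positive_circuits I u. halfspace_Inter J u c)"
proof
  show "halfspace_Inter I u c \<subseteq> (\<Inter>J\<in>positive_circuits I u. halfspace_Inter J u c)"
    using halfspace_Inter_antimono by (fastforce simp: positive_circuits_def)
  show "(\<Inter>J\<in>positive_circuits I u. halfspace_Inter J u c) \<subseteq> halfspace_Inter I u c"
  proof
    fix y assume y: "y \<in> (\<Inter>J\<in>positive_circuits I u. halfspace_Inter J u c)"
    show "y \<in> halfspace_Inter I u c"
    proof (rule ccontr)
      assume "y \<notin> halfspace_Inter I u c"
      then obtain i where i: "i \<in> I" "c i < u i \<bullet> y" by (auto simp: halfspace_Inter_def not_le)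
      obtain J l where "J \<subseteq> I" "i \<in> J" "card J = DIM('a) + 1" "\<forall>j\<in>J. l j > 0"
          "(\<Sum>j\<in>J. l j *\<^sub>R u j) = 0"
        using positive_circuit_through[OF assms(1) i(1) assms(2,3) generic] by blast
      then have "J \<in> positive_circuits I u" by (auto simp: positive_circuits_def)
      moreover have "y \<notin> halfspace_Inter J u c"
        using i \<open>i \<in> J\<close> by (auto simp: halfspace_Inter_def not_le)
      ultimately show False using y by blast
    qed
  qed
qed

theorem halfspace_Inter_eq_Inter_simplices:
  fixes u :: "'i \<Rightarrow> 'a::euclidean_space"
  assumes "finite I" "bounded (halfspace_Inter I u c)" "\<forall>j\<in>I. u j \<bullet> p < c j"
    and generic: "\<And>A. A \<subseteq> I \<Longrightarrow> card A \<le> DIM('a) \<Longrightarrow> family_independent A u"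
  shows "\<exists>S. finite S \<and> card S \<le> card I choose (DIM('a) + 1)
           \<and> (\<forall>T\<in>S. int DIM('a) simplex T)
           \<and> halfspace_Inter I u c = \<Inter> S
           \<and> (\<forall>T\<in>S. \<forall>G. G facet_of T \<longrightarrow>
                (\<exists>j\<in>I. halfspace_Inter I u c \<inter> {x. u j \<bullet> x = c j} \<subseteq> G))"
proof -
  define S where "S = (\<lambda>J. halfspace_Inter J u c) ` positive_circuits I u"
  have p: "p \<in> halfspace_Inter I u c" using assms(3) by (auto simp: halfspace_Inter_def less_imp_le)
  have "finite S" "card S \<le> card I choose (DIM('a) + 1)"
    unfolding S_def using card_positive_circuits_le[OF assms(1), of u] card_image_le le_trans by blast+
  moreover have "halfspace_Inter I u c = \<Inter> S"
    unfolding S_def by (rule halfspace_Inter_eq_Inter_positive_circuits[OF assms(1,2) p generic])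
  moreover have "int DIM('a) simplex T \<and> (\<forall>G. G facet_of T \<longrightarrow>
      (\<exists>j\<in>I. halfspace_Inter I u c \<inter> {x. u j \<bullet> x = c j} \<subseteq> G))" if "T \<in> S" for T
  proof -
    obtain J where J: "J \<in> positive_circuits I u" "T = halfspace_Inter J u c"
      using \<open>T \<in> S\<close> by (auto simp: S_def)
    obtain l where "positive_circuit J u c l"
      using positive_circuit_if_interior_point[OF assms(1) J(1) assms(3) generic] by blast
    then show ?thesis
      using positive_circuit.simplex_halfspace_Inter positive_circuit.facet_of_halfspace_Inter
        J halfspace_Inter_antimono[of J I u c] by (fastforce simp: positive_circuits_def)
  qed
  ultimately show ?thesis by blast
qed

lemma hyperplane_subset_imp_parallel:
  fixes a n :: "'a::euclidean_space"
  assumes "a \<noteq> 0" "{x. a \<bullet> x = \<beta>} \<subseteq> {x. n \<bullet> x = \<gamma>}"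
  shows "n = (n \<bullet> a / (a \<bullet> a)) *\<^sub>R a \<and> \<gamma> = (n \<bullet> a / (a \<bullet> a)) * \<beta>"
proof -
  define x0 where "x0 = (\<beta> / (a \<bullet> a)) *\<^sub>R a"
  have aa: "a \<bullet> a \<noteq> 0" using assms by simp
  have x0: "a \<bullet> x0 = \<beta>" using aa by (simp add: x0_def)
  define w where "w = n - (n \<bullet> a / (a \<bullet> a)) *\<^sub>R a"
  have aw: "a \<bullet> w = 0" using aa by (simp add: w_def inner_diff_right inner_commute)
  \<comment> \<open>\<open>n\<close> is constant on the first hyperplane, so its component \<open>w\<close> orthogonal to \<open>a\<close> vanishes\<close>
  have "a \<bullet> (x0 + w) = \<beta>" using x0 aw by (simp add: inner_add_right)
  then have "n \<bullet> (x0 + w) = \<gamma>" "n \<bullet> x0 = \<gamma>" using x0 assms(2) by blast+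
  then have "n \<bullet> w = 0" by (simp add: inner_add_right)
  then have "w \<bullet> w = 0" using aw by (simp add: w_def inner_diff_left)
  then have n: "n = (n \<bullet> a / (a \<bullet> a)) *\<^sub>R a" by (simp add: w_def)
  have "\<gamma> = n \<bullet> x0" using x0 assms(2) by blast
  also have "\<dots> = (n \<bullet> a / (a \<bullet> a)) * \<beta>" by (subst n) (simp add: x0)
  finally show ?thesis using n by simp
qed

lemma affine_hull_facet_eq_hyperplane:
  fixes K :: "'a::euclidean_space set"
  assumes "G facet_of K" "aff_dim K = DIM('a)" "G \<subseteq> {x. a \<bullet> x = \<beta>}" "a \<noteq> 0"
  shows "affine hull G = {x. a \<bullet> x = \<beta>}"
proof (rule affine_dim_equal)
  show "affine hull G \<subseteq> {x. a \<bullet> x = \<beta>}"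
    using assms(3) affine_hyperplane by (rule hull_minimal)
  show "aff_dim (affine hull G) = aff_dim {x. a \<bullet> x = \<beta>}"
    using assms by (simp add: facet_of_def)
qed (use assms(1) in \<open>auto simp: facet_of_def affine_hyperplane\<close>)

lemma facet_of_polyhedron_parallel:
  fixes K :: "'a::euclidean_space set"
  assumes "polyhedron K" "aff_dim K = DIM('a)" "G facet_of K" "n \<noteq> 0" "G \<subseteq> {x. n \<bullet> x = \<gamma>}"
  obtains m \<beta> where "m \<noteq> 0" "K \<subseteq> {x. (m *\<^sub>R n) \<bullet> x \<le> \<beta>}" "G = K \<inter> {x. (m *\<^sub>R n) \<bullet> x = \<beta>}"
proof -
  obtain a \<beta> where a: "a \<noteq> 0" "K \<subseteq> {x. a \<bullet> x \<le> \<beta>}" "G = K \<inter> {x. a \<bullet> x = \<beta>}"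
    using facet_of_polyhedron[OF assms(1,3)] by blast
  have "{x. a \<bullet> x = \<beta>} = affine hull G"
    using affine_hull_facet_eq_hyperplane[OF assms(3,2) _ a(1)] a(3) by auto
  also have "\<dots> \<subseteq> {x. n \<bullet> x = \<gamma>}"
    using assms(5) affine_hyperplane by (rule hull_minimal)
  finally obtain r where n: "n = r *\<^sub>R a"
    using hyperplane_subset_imp_parallel[OF a(1)] by blast
  then have "r \<noteq> 0" using assms(4) by auto
  then have "a = (1 / r) *\<^sub>R n" using n by simp
  then show ?thesis using that[of "1 / r" \<beta>] a(2,3) \<open>r \<noteq> 0\<close> by simp
qed

lemma rel_interior_facet_inequality_strict:
  fixes K :: "'a::euclidean_space set"
  assumes "polyhedron K" "p \<in> rel_interior K" "G facet_of K"
    "K \<subseteq> {x. a \<bullet> x \<le> \<beta>}" "G = K \<inter> {x. a \<bullet> x = \<beta>}"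
  shows "a \<bullet> p < \<beta>"
proof -
  have "p \<notin> G" using assms(2,3) rel_boundary_of_polyhedron[OF assms(1)] by blast
  moreover have "p \<in> K" using assms(2) rel_interior_subset by blast
  ultimately show ?thesis using assms(4,5) by fastforce
qed

lemma polyhedron_eq_halfspace_Inter_facets:
  fixes K :: "'a::euclidean_space set"
  assumes "polyhedron K" "aff_dim K = DIM('a)"
    and halfspaces: "\<And>j. j \<in> I \<Longrightarrow> K \<subseteq> {x. u j \<bullet> x \<le> c j}"
    and facets: "\<And>G. G facet_of K \<Longrightarrow> \<exists>j\<in>I. G = K \<inter> {x. u j \<bullet> x = c j}"
  shows "K = halfspace_Inter I u c"
proof
  show "K \<subseteq> halfspace_Inter I u c" using halfspaces by (auto simp: halfspace_Inter_def)
  show "halfspace_Inter I u c \<subseteq> K"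
  proof
    fix y assume y: "y \<in> halfspace_Inter I u c"
    show "y \<in> K"
    proof (rule ccontr)
      assume "y \<notin> K"
      have "K \<noteq> {}" using assms(2) by auto
      then obtain p where p: "p \<in> rel_interior K"
        using rel_interior_eq_empty polyhedron_imp_convex[OF assms(1)] by blast
      have "affine hull K = UNIV" using assms(2) aff_dim_eq_full by blast
      then have int: "interior K = rel_interior K" by (simp add: rel_interior_interior)
      \<comment> \<open>the segment from an interior point to \<open>y\<close> leaves \<open>K\<close> through a facet\<close>
      obtain z where z: "z \<in> closed_segment p y" "z \<in> frontier K"
        using connected_Int_frontier[OF connected_segment, of p y K] p \<open>y \<notin> K\<close> rel_interior_subset
        by blast
      have "z \<in> K - rel_interior K"
        using z(2) int polyhedron_imp_closed[OF assms(1)] by (simp add: frontier_def)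
      then obtain G where G: "G facet_of K" "z \<in> G" using rel_boundary_of_polyhedron[OF assms(1)] by blast
      then obtain j where j: "j \<in> I" "G = K \<inter> {x. u j \<bullet> x = c j}" using facets by blast
      have "u j \<bullet> p < c j"
        using rel_interior_facet_inequality_strict[OF assms(1) p G(1) halfspaces[OF j(1)] j(2)] .
      obtain t where t: "0 \<le> t" "t \<le> 1" "z = (1 - t) *\<^sub>R p + t *\<^sub>R y"
        using z(1) by (auto simp: in_segment)
      have "t \<noteq> 1" using t(3) G(2) j(2) \<open>y \<notin> K\<close> by auto
      then have "(1 - t) * (u j \<bullet> p) < (1 - t) * c j"
        using t(2) \<open>u j \<bullet> p < c j\<close> by (intro mult_strict_left_mono) auto
      moreover have "t * (u j \<bullet> y) \<le> t * c j"
        using y j(1) t(1) by (intro mult_left_mono) (auto simp: halfspace_Inter_def)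
      moreover have "u j \<bullet> z = (1 - t) * (u j \<bullet> p) + t * (u j \<bullet> y)"
        using t(3) by (simp add: inner_add_right)
      moreover have "u j \<bullet> z = c j" using G(2) j(2) by blast
      ultimately show False by (simp add: algebra_simps)
    qed
  qed
qed

lemma full_dim_polyhedron_facet_inequalities:
  fixes K :: "'a::euclidean_space set"
  assumes "polyhedron K" "aff_dim K = DIM('a)" "F ` I = {G. G facet_of K}"
    and "\<And>j. j \<in> I \<Longrightarrow> nv j \<noteq> 0" "\<And>j. j \<in> I \<Longrightarrow> F j \<subseteq> {x. nv j \<bullet> x = \<gamma> j}"
  obtains m u c p where "\<And>j. j \<in> I \<Longrightarrow> m j \<noteq> 0 \<and> u j = m j *\<^sub>R nv j"
    "\<And>j. j \<in> I \<Longrightarrow> F j = K \<inter> {x. u j \<bullet> x = c j}"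
    "K = halfspace_Inter I u c" "\<forall>j\<in>I. u j \<bullet> p < c j"
proof -
  have "\<exists>m \<beta>. m \<noteq> 0 \<and> K \<subseteq> {x. (m *\<^sub>R nv j) \<bullet> x \<le> \<beta>} \<and> F j = K \<inter> {x. (m *\<^sub>R nv j) \<bullet> x = \<beta>}"
    if j: "j \<in> I" for j
  proof -
    have facet: "F j facet_of K" using assms(3) imageI[OF j, of F] by simp
    obtain m \<beta> where "m \<noteq> 0" "K \<subseteq> {x. (m *\<^sub>R nv j) \<bullet> x \<le> \<beta>}"
        "F j = K \<inter> {x. (m *\<^sub>R nv j) \<bullet> x = \<beta>}"
      by (rule facet_of_polyhedron_parallel[OF assms(1,2) facet assms(4,5)[OF j]])
    then show ?thesis by (intro exI[of _ m] exI[of _ \<beta>] conjI)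
  qed
  then obtain m c where mc: "\<And>j. j \<in> I \<Longrightarrow> m j \<noteq> 0
      \<and> K \<subseteq> {x. (m j *\<^sub>R nv j) \<bullet> x \<le> c j} \<and> F j = K \<inter> {x. (m j *\<^sub>R nv j) \<bullet> x = c j}"
    by metis
  define u where "u j = m j *\<^sub>R nv j" for j
  have muc: "m j \<noteq> 0 \<and> u j = m j *\<^sub>R nv j \<and> K \<subseteq> {x. u j \<bullet> x \<le> c j} \<and> F j = K \<inter> {x. u j \<bullet> x = c j}"
    if "j \<in> I" for j
    using mc[OF that] by (simp add: u_def)
  have K: "K = halfspace_Inter I u c"
  proof (rule polyhedron_eq_halfspace_Inter_facets[OF assms(1,2)])
    show "\<And>j. j \<in> I \<Longrightarrow> K \<subseteq> {x. u j \<bullet> x \<le> c j}" using muc by blast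
    fix G assume "G facet_of K"
    then obtain j where "j \<in> I" "G = F j" using assms(3) by (metis imageE mem_Collect_eq)
    then show "\<exists>j\<in>I. G = K \<inter> {x. u j \<bullet> x = c j}" using muc by blast
  qed
  have "K \<noteq> {}" using assms(2) by auto
  then obtain p where p: "p \<in> rel_interior K"
    using rel_interior_eq_empty polyhedron_imp_convex[OF assms(1)] by blast
  have "\<forall>j\<in>I. u j \<bullet> p < c j"
    using rel_interior_facet_inequality_strict[OF assms(1) p] muc assms(3) by blast
  with muc K show ?thesis using that by blast
qed

theorem theorem3p8:
  fixes K :: "'a::euclidean_space set"
    and N :: nat
    and F :: "nat \<Rightarrow> 'a set"
    and nv :: "nat \<Rightarrow> 'a"
    and b :: "nat \<Rightarrow> real"
  assumes "N \<ge> DIM('a)"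
    and "polytope K"
    and "aff_dim K = int DIM('a)"
    and "inj_on F {0..N}"
    and "F ` {0..N} = {G. G facet_of K}"
    and "\<And>j. j \<le> N \<Longrightarrow> nv j \<noteq> 0"
    and "\<And>j. j \<le> N \<Longrightarrow> F j \<subseteq> {x. nv j \<bullet> x + b j = 0}"
    and "\<And>J. J \<subseteq> {0..N} \<Longrightarrow> card J = DIM('a) \<Longrightarrow>
            inj_on nv J \<and> independent (nv ` J)"
  shows "\<exists>S :: 'a set set. finite S \<and> card S \<le> (N + 1) choose (DIM('a) + 1)
           \<and> (\<forall>T\<in>S. int DIM('a) simplex T)
           \<and> K = \<Inter> S
           \<and> (\<forall>T\<in>S. \<forall>G. G facet_of T \<longrightarrow> (\<exists>j\<le>N. F j \<subseteq> G))"
proof -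
  have nv: "nv j \<noteq> 0" "F j \<subseteq> {x. nv j \<bullet> x = - b j}" if "j \<in> {0..N}" for j
    using assms(6,7)[of j] that by (auto simp: eq_neg_iff_add_eq_0)
  obtain m u c p where
    scaled: "\<And>j. j \<in> {0..N} \<Longrightarrow> m j \<noteq> 0 \<and> u j = m j *\<^sub>R nv j" and
    facets: "\<And>j. j \<in> {0..N} \<Longrightarrow> F j = K \<inter> {x. u j \<bullet> x = c j}" and
    K: "K = halfspace_Inter {0..N} u c" and interior: "\<forall>j\<in>{0..N}. u j \<bullet> p < c j"
    using full_dim_polyhedron_facet_inequalities[OF polytope_imp_polyhedron[OF assms(2)] assms(3,5) nv]
    by blast
  have generic: "family_independent A u" if "A \<subseteq> {0..N}" "card A \<le> DIM('a)" for A
    using family_independent_if_bases[of "{0..N}" nv m u A] assms(1,8) scaled that by simp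
  obtain S where "finite S" "card S \<le> (N + 1) choose (DIM('a) + 1)" "\<forall>T\<in>S. int DIM('a) simplex T"
    "K = \<Inter> S" "\<forall>T\<in>S. \<forall>G. G facet_of T \<longrightarrow> (\<exists>j\<in>{0..N}. K \<inter> {x. u j \<bullet> x = c j} \<subseteq> G)"
    using halfspace_Inter_eq_Inter_simplices[OF _ _ interior generic]
      polytope_imp_bounded[OF assms(2)] unfolding K[symmetric] by auto
  moreover have "\<exists>j\<le>N. F j \<subseteq> G" if G: "\<exists>j\<in>{0..N}. K \<inter> {x. u j \<bullet> x = c j} \<subseteq> G" for G
  proof -
    obtain j where "j \<in> {0..N}" "K \<inter> {x. u j \<bullet> x = c j} \<subseteq> G" using G by blast
    then show ?thesis using facets[of j] by auto
  qed
  ultimately show ?thesis by blast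
qed

end
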